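(* Let $0\le\gamma<1$ and let $f=h+\overline{g}$ be harmonic in $\Omega_\gamma$, where $h,g$ are analytic in $\Omega_\gamma$ with $h(z)=\sum_{n=0}^\infty a_nz^n$, $g(z)=\sum_{n=0}^\infty b_nz^n$ for $z\in\mathbb{D}$, and suppose $|h(z)|+|g(z)|\le1$ for all $z\in\Omega_\gamma$. Then $$\sqrt{|a_0|^2+|b_0|^2}+\sum_{n=1}^\infty\sqrt{|a_n|^2+|b_n|^2}\,r^n\le1\quad\text{for } |z|=r\le r_0:=\frac{1+\gamma}{3+\gamma}.$$
   Context: $\mathbb{D}$ is the open unit disk. For $0\le\gamma<1$, $\Omega_\gamma=\{z\in\mathbb{C}:|z+\frac{\gamma}{1-\gamma}|<\frac{1}{1-\gamma}\}$, which contains $\mathbb{D}$. *)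

theory Defs
  imports "HOL-Complex_Analysis.Complex_Analysis"
begin

definition Omega :: "real \<Rightarrow> complex set" where
  "Omega \<gamma> = ball (complex_of_real (- \<gamma> / (1 - \<gamma>))) (1 / (1 - \<gamma>))"

end

theory Submission
  imports Defs
begin

text \<open>The Moebius map \<open>\<psi>(w) = (1 + \<gamma>) w / (1 + \<gamma> w)\<close> carries the unit disk into
  \<open>\<Omega>\<^sub>\<gamma>\<close>. Pulling the Cauchy formula for the Taylor coefficients of \<open>F\<close>, \<open>|F| \<le> 1\<close> on \<open>\<Omega>\<^sub>\<gamma>\<close>,
  back along \<open>\<psi>\<close> to a circle \<open>|w| = \<rho>\<close>, the kernel becomes the conjugate of a polynomial
  vanishing at \<open>0\<close>, and Caratheodory's trick gives \<open>|F\<^sub>n| \<le> 2 (1 - Re F(0)) / (1 + \<gamma>)\<close> for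
  \<open>n \<ge> 1\<close>. Applied to rotations of \<open>h \<plusminus> \<beta> g\<close>, where the unimodular \<open>\<beta>\<close> makes \<open>a\<^sub>0\<close> and \<open>\<beta> b\<^sub>0\<close>
  orthogonal, the parallelogram law yields
  \<open>\<surd>(|a\<^sub>n|\<^sup>2 + |b\<^sub>n|\<^sup>2) \<le> 2 (1 - \<surd>(|a\<^sub>0|\<^sup>2 + |b\<^sub>0|\<^sup>2)) / (1 + \<gamma>)\<close>, and summing the geometric
  tail closes the estimate since \<open>r / (1 - r) \<le> (1 + \<gamma>) / 2\<close> for \<open>r \<le> r\<^sub>0\<close>.\<close>

definition omega_map :: "real \<Rightarrow> complex \<Rightarrow> complex" where
  "omega_map \<gamma> w = (1 + of_real \<gamma>) * w / (1 + of_real \<gamma> * w)"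

lemma omega_map_denom_nonzero:
  fixes w :: complex
  assumes "\<bar>\<gamma>\<bar> \<le> 1" "norm w < 1"
  shows "1 + of_real \<gamma> * w \<noteq> 0"
proof
  assume "1 + of_real \<gamma> * w = 0"
  hence "norm (of_real \<gamma> * w) = 1" by (simp add: add_eq_0_iff)
  moreover have "\<bar>\<gamma>\<bar> * norm w \<le> norm w" using assms(1) by (simp add: mult_left_le_one_le)
  ultimately show False using assms(2) by (simp add: norm_mult)
qed

lemma omega_map_in_Omega:
  assumes "0 \<le> \<gamma>" "\<gamma> < 1" "norm w < 1"
  shows "omega_map \<gamma> w \<in> Omega \<gamma>"
proof -
  have den: "1 + of_real \<gamma> * w \<noteq> 0" using assms by (intro omega_map_denom_nonzero) auto
  have "(norm (1 + of_real \<gamma> * w))\<^sup>2 - (norm (w + of_real \<gamma>))\<^sup>2 = (1 - \<gamma>\<^sup>2) * (1 - (norm w)\<^sup>2)"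
    unfolding cmod_power2 by (simp add: power2_eq_square algebra_simps)
  also have "\<dots> > 0"
    using assms by (intro mult_pos_pos) (auto simp: power_less_one_iff abs_square_less_1)
  finally have "(norm (w + of_real \<gamma>))\<^sup>2 < (norm (1 + of_real \<gamma> * w))\<^sup>2"
    by simp
  hence lt: "norm (w + of_real \<gamma>) < norm (1 + of_real \<gamma> * w)"
    by (rule power2_less_imp_less) simp
  have eq: "omega_map \<gamma> w - of_real (- \<gamma> / (1 - \<gamma>))
      = (w + of_real \<gamma>) / (of_real (1 - \<gamma>) * (1 + of_real \<gamma> * w))"
    using den assms by (simp add: omega_map_def field_simps)
  have "norm (omega_map \<gamma> w - of_real (- \<gamma> / (1 - \<gamma>)))
      = (norm (w + of_real \<gamma>) / norm (1 + of_real \<gamma> * w)) / (1 - \<gamma>)"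
    unfolding eq norm_divide norm_mult norm_of_real using assms by simp
  also have "\<dots> < 1 / (1 - \<gamma>)"
    using lt den assms by (intro divide_strict_right_mono) auto
  finally show ?thesis unfolding Omega_def mem_ball dist_norm by (simp add: norm_minus_commute)
qed

lemma one_plus_of_real_nonzero: "0 \<le> \<gamma> \<Longrightarrow> 1 + complex_of_real \<gamma> \<noteq> 0"
  by (metis of_real_1 of_real_add of_real_eq_0_iff add_nonneg_eq_0_iff zero_le_one one_neq_zero)

lemma omega_map_eq_0_iff:
  assumes "0 \<le> \<gamma>" "\<gamma> \<le> 1" "norm w < 1"
  shows "omega_map \<gamma> w = 0 \<longleftrightarrow> w = 0"
  using one_plus_of_real_nonzero omega_map_denom_nonzero[of \<gamma> w] assms by (simp add: omega_map_def)

lemma omega_map_has_field_derivative: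
  assumes "1 + of_real \<gamma> * w \<noteq> 0"
  shows "(omega_map \<gamma> has_field_derivative (1 + of_real \<gamma>) / (1 + of_real \<gamma> * w)\<^sup>2) (at w)"
  unfolding omega_map_def[abs_def] using assms
  by (auto intro!: derivative_eq_intros simp: field_simps power2_eq_square)

lemma holomorphic_omega_map: "\<bar>\<gamma>\<bar> \<le> 1 \<Longrightarrow> omega_map \<gamma> holomorphic_on ball 0 1"
  unfolding omega_map_def[abs_def] using omega_map_denom_nonzero
  by (intro holomorphic_intros) auto

lemma deriv_omega_map_over_omega_map:
  assumes "0 \<le> \<gamma>" "\<gamma> \<le> 1" "norm w < 1" "w \<noteq> 0"
  shows "deriv (omega_map \<gamma>) w / omega_map \<gamma> w = 1 / ((1 + of_real \<gamma> * w) * w)"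
proof -
  define D where "D = 1 + of_real \<gamma> * w"
  define c where "c = 1 + complex_of_real \<gamma>"
  have D: "D \<noteq> 0" unfolding D_def using assms by (intro omega_map_denom_nonzero) auto
  have c: "c \<noteq> 0" using one_plus_of_real_nonzero assms unfolding c_def by simp
  have "c / D\<^sup>2 / (c * w / D) = 1 / (D * w)"
    using c D assms(4) by (simp add: field_simps power2_eq_square)
  thus ?thesis
    using DERIV_imp_deriv[OF omega_map_has_field_derivative[OF D[unfolded D_def]]]
    by (simp add: omega_map_def c_def D_def)
qed

definition coeff_kernel :: "real \<Rightarrow> nat \<Rightarrow> complex \<Rightarrow> complex" where
  "coeff_kernel \<gamma> m w = (1 + of_real \<gamma> * w) ^ m / ((1 + of_real \<gamma>) ^ Suc m * w ^ Suc m)"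

lemma deriv_omega_map_over_power:
  assumes "0 \<le> \<gamma>" "\<gamma> \<le> 1" "norm w < 1" "w \<noteq> 0"
  shows "deriv (omega_map \<gamma>) w / omega_map \<gamma> w ^ Suc (Suc m) = coeff_kernel \<gamma> m w / w"
proof -
  define D where "D = 1 + of_real \<gamma> * w"
  define c where "c = 1 + complex_of_real \<gamma>"
  have D: "D \<noteq> 0" unfolding D_def using assms by (intro omega_map_denom_nonzero) auto
  have c: "c \<noteq> 0" using one_plus_of_real_nonzero assms unfolding c_def by simp
  have "(c * w / D) ^ Suc (Suc m) = c\<^sup>2 * c ^ m * w\<^sup>2 * w ^ m / (D\<^sup>2 * D ^ m)"
    by (simp add: power_divide power_mult_distrib power2_eq_square mult_ac)
  hence "c / D\<^sup>2 / (c * w / D) ^ Suc (Suc m) = D ^ m / (c ^ Suc m * w ^ Suc m) / w"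
    using c D assms(4) by (simp add: field_simps power2_eq_square)
  thus ?thesis
    using DERIV_imp_deriv[OF omega_map_has_field_derivative[OF D[unfolded D_def]]]
    by (simp add: omega_map_def coeff_kernel_def c_def D_def)
qed

lemma contour_integral_circlepath_over_z:
  assumes "0 < \<rho>"
  shows "contour_integral (circlepath 0 \<rho>) (\<lambda>u. f u / u)
       = 2 * of_real pi * \<i> * integral {0..1} (\<lambda>t. f (circlepath 0 \<rho> t))"
proof -
  have "contour_integral (circlepath 0 \<rho>) (\<lambda>u. f u / u)
      = integral {0..1} (\<lambda>t. f (circlepath 0 \<rho> t) / circlepath 0 \<rho> t
                              * vector_derivative (circlepath 0 \<rho>) (at t))"
    by (rule contour_integral_integral)
  also have "\<dots> = integral {0..1} (\<lambda>t. 2 * of_real pi * \<i> * f (circlepath 0 \<rho> t))"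
  proof (rule integral_cong)
    fix t :: real
    have "vector_derivative (circlepath 0 \<rho>) (at t) = 2 * pi * \<i> * \<rho> * exp (2 * of_real pi * \<i> * t)"
      by (rule vector_derivative_at) (rule has_vector_derivative_circlepath)
    thus "f (circlepath 0 \<rho> t) / circlepath 0 \<rho> t * vector_derivative (circlepath 0 \<rho>) (at t)
        = 2 * of_real pi * \<i> * f (circlepath 0 \<rho> t)"
      using assms by (simp add: circlepath field_simps)
  qed
  finally show ?thesis by simp
qed

lemma integral_circlepath_holomorphic:
  assumes "0 < \<rho>" "f holomorphic_on cball 0 \<rho>"
  shows "integral {0..1} (\<lambda>t. f (circlepath 0 \<rho> t)) = f 0"
proof -
  have "((\<lambda>u. f u / (u - 0)) has_contour_integral (2 * of_real pi * \<i> * f 0)) (circlepath 0 \<rho>)"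
    using assms
    by (intro Cauchy_integral_circlepath)
       (auto intro: holomorphic_on_imp_continuous_on holomorphic_on_subset)
  hence "contour_integral (circlepath 0 \<rho>) (\<lambda>u. f u / u) = 2 * of_real pi * \<i> * f 0"
    by (simp add: contour_integral_unique)
  with contour_integral_circlepath_over_z[OF assms(1), of f] show ?thesis by simp
qed

lemma circlepath_in_sphere:
  assumes "0 \<le> \<rho>"
  shows "circlepath 0 \<rho> t \<in> sphere 0 \<rho>"
proof -
  have "norm (exp (2 * of_real pi * \<i> * of_real t)) = 1" by (simp add: norm_exp_eq_Re)
  thus ?thesis using assms unfolding circlepath by (simp add: norm_mult)
qed

lemma integrable_circlepath:
  fixes f :: "complex \<Rightarrow> 'a::banach"
  assumes "continuous_on (sphere 0 \<rho>) f" "0 \<le> \<rho>"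
  shows "(\<lambda>t. f (circlepath 0 \<rho> t)) integrable_on {0..1}"
proof -
  have "continuous_on {0..1} (circlepath 0 \<rho>)" using path_circlepath unfolding path_def by blast
  hence "continuous_on {0..1} (\<lambda>t. f (circlepath 0 \<rho> t))"
    using circlepath_in_sphere assms by (intro continuous_on_compose2[OF assms(1)]) auto
  thus ?thesis by (rule integrable_continuous_real)
qed

lemma valid_path_omega_map_circlepath:
  assumes "\<bar>\<gamma>\<bar> \<le> 1" "0 \<le> \<rho>" "\<rho> < 1"
  shows "valid_path (omega_map \<gamma> \<circ> circlepath 0 \<rho>)"
  using assms
  by (intro valid_path_compose_holomorphic[OF _ holomorphic_omega_map]) (auto simp: path_image_circlepath)

lemma path_image_omega_map_circlepath:
  assumes "0 \<le> \<gamma>" "\<gamma> < 1" "0 < \<rho>" "\<rho> < 1"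
  shows "path_image (omega_map \<gamma> \<circ> circlepath 0 \<rho>) \<subseteq> Omega \<gamma> - {0}"
  using assms omega_map_in_Omega omega_map_eq_0_iff
  unfolding path_image_compose by (auto simp: path_image_circlepath)

lemma winding_number_omega_map_circlepath:
  assumes "0 \<le> \<gamma>" "\<gamma> < 1" "0 < \<rho>" "\<rho> < 1"
  shows "winding_number (omega_map \<gamma> \<circ> circlepath 0 \<rho>) 0 = 1"
proof -
  let ?e = "circlepath 0 \<rho>"
  have ran: "path_image ?e \<subseteq> ball 0 1" using assms by (auto simp: path_image_circlepath)
  have den: "1 + of_real \<gamma> * w \<noteq> 0" if "norm w < 1" for w :: complex
    using that assms by (intro omega_map_denom_nonzero) auto
  have "contour_integral (omega_map \<gamma> \<circ> ?e) (\<lambda>z. 1 / (z - 0))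
      = contour_integral ?e (\<lambda>w. deriv (omega_map \<gamma>) w * (1 / (omega_map \<gamma> w - 0)))"
    using assms ran holomorphic_omega_map[of \<gamma>]
    by (intro contour_integral_comp_analyticW) (auto simp: analytic_on_open)
  also have "\<dots> = contour_integral ?e (\<lambda>w. (1 / (1 + of_real \<gamma> * w)) / (w - 0))"
    using deriv_omega_map_over_omega_map assms
    by (intro contour_integral_cong) (auto simp: path_image_circlepath)
  also have "\<dots> = 2 * of_real pi * \<i> * (1 / (1 + of_real \<gamma> * 0))"
  proof (intro contour_integral_unique Cauchy_integral_circlepath)
    have "(\<lambda>w. 1 / (1 + of_real \<gamma> * w)) holomorphic_on cball 0 \<rho>"
      using den assms by (intro holomorphic_intros) auto
    thus "continuous_on (cball 0 \<rho>) (\<lambda>w::complex. 1 / (1 + of_real \<gamma> * w))"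
      and "(\<lambda>w::complex. 1 / (1 + of_real \<gamma> * w)) holomorphic_on ball 0 \<rho>"
      by (auto intro: holomorphic_on_imp_continuous_on holomorphic_on_subset)
  qed (use assms in simp)
  finally have "contour_integral (omega_map \<gamma> \<circ> ?e) (\<lambda>z. 1 / (z - 0)) = 2 * of_real pi * \<i>"
    by simp
  moreover have "0 \<notin> path_image (omega_map \<gamma> \<circ> ?e)"
    using path_image_omega_map_circlepath[OF assms] by auto
  ultimately show ?thesis
    using winding_number_valid_path[OF valid_path_omega_map_circlepath] assms by simp
qed

lemma contour_integral_omega_map_circlepath_over_power:
  assumes "0 \<le> \<gamma>" "\<gamma> < 1" "F holomorphic_on Omega \<gamma>" "0 < \<rho>" "\<rho> < 1"
  shows "contour_integral (omega_map \<gamma> \<circ> circlepath 0 \<rho>) (\<lambda>z. F z / z ^ Suc n)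
       = 2 * of_real pi * \<i> * ((deriv ^^ n) F 0 / fact n)"
proof -
  let ?P = "omega_map \<gamma> \<circ> circlepath 0 \<rho>" and ?f = "\<lambda>z. F z / z ^ Suc n"
  have opO: "open (Omega \<gamma>)" and cvO: "convex (Omega \<gamma>)" unfolding Omega_def by auto
  have vP: "valid_path ?P" using valid_path_omega_map_circlepath assms by simp
  have cP: "pathfinish ?P = pathstart ?P" by (simp add: pathfinish_compose pathstart_compose)
  have pP: "path_image ?P \<subseteq> Omega \<gamma> - {0}" by (rule path_image_omega_map_circlepath) (use assms in auto)
  have "contour_integral ?P ?f = 2 * pi * \<i> * (\<Sum>p\<in>{0}. winding_number ?P p * residue ?f p)"
  proof (rule Residue_theorem[OF opO convex_connected[OF cvO]])
    show "?f holomorphic_on Omega \<gamma> - {0}"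
      using assms(3) by (intro holomorphic_intros) (auto intro: holomorphic_on_subset)
    show "\<forall>z. z \<notin> Omega \<gamma> \<longrightarrow> winding_number ?P z = 0"
      using winding_number_zero_outside[OF valid_path_imp_path[OF vP] cvO cP] pP by auto
  qed (use vP cP pP in auto)
  moreover have "0 \<in> Omega \<gamma>" using omega_map_in_Omega[of \<gamma> 0] assms by (simp add: omega_map_def)
  hence "residue ?f 0 = (deriv ^^ n) F 0 / fact n"
    by (rule residue_holomorphic_over_power'[OF opO _ assms(3)])
  moreover have "winding_number ?P 0 = 1"
    by (rule winding_number_omega_map_circlepath) (use assms in auto)
  ultimately show ?thesis by simp
qed

lemma taylor_coeff_omega_pullback:
  assumes "0 \<le> \<gamma>" "\<gamma> < 1" "F holomorphic_on Omega \<gamma>" "0 < \<rho>" "\<rho> < 1"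
  shows "(deriv ^^ Suc m) F 0 / fact (Suc m)
       = integral {0..1} (\<lambda>t. F (omega_map \<gamma> (circlepath 0 \<rho> t)) * coeff_kernel \<gamma> m (circlepath 0 \<rho> t))"
proof -
  let ?e = "circlepath 0 \<rho>" and ?f = "\<lambda>z. F z / z ^ Suc (Suc m)"
  let ?I = "integral {0..1} (\<lambda>t. F (omega_map \<gamma> (?e t)) * coeff_kernel \<gamma> m (?e t))"
  have "path_image ?e \<subseteq> ball 0 1" using assms by (auto simp: path_image_circlepath)
  hence "contour_integral (omega_map \<gamma> \<circ> ?e) ?f
      = contour_integral ?e (\<lambda>w. deriv (omega_map \<gamma>) w * ?f (omega_map \<gamma> w))"
    using assms holomorphic_omega_map[of \<gamma>]
    by (intro contour_integral_comp_analyticW) (auto simp: analytic_on_open)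
  also have "\<dots> = contour_integral ?e (\<lambda>w. F (omega_map \<gamma> w) * coeff_kernel \<gamma> m w / w)"
  proof (rule contour_integral_cong)
    fix w assume "w \<in> path_image ?e"
    hence "deriv (omega_map \<gamma>) w / omega_map \<gamma> w ^ Suc (Suc m) = coeff_kernel \<gamma> m w / w"
      using assms by (intro deriv_omega_map_over_power) (auto simp: path_image_circlepath)
    thus "deriv (omega_map \<gamma>) w * ?f (omega_map \<gamma> w) = F (omega_map \<gamma> w) * coeff_kernel \<gamma> m w / w"
      by (metis times_divide_eq_right mult.commute)
  qed simp
  also have "\<dots> = 2 * of_real pi * \<i> * ?I"
    by (rule contour_integral_circlepath_over_z) (use assms in simp)
  finally have "2 * of_real pi * \<i> * ((deriv ^^ Suc m) F 0 / fact (Suc m)) = 2 * of_real pi * \<i> * ?I"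
    unfolding contour_integral_omega_map_circlepath_over_power[OF assms] .
  thus ?thesis by (rule mult_left_cancel[THEN iffD1, rotated]) simp
qed

text \<open>On \<open>|w| = \<rho>\<close> we have \<open>cnj w = \<rho>\<^sup>2 / w\<close>, so there the kernel is the conjugate of a
  polynomial vanishing at \<open>0\<close>.\<close>

lemma coeff_kernel_eq_cnj_on_circle:
  fixes w :: complex
  assumes "0 < \<rho>" "norm w = \<rho>"
  shows "coeff_kernel \<gamma> m w
       = cnj (w * (w + of_real (\<gamma> * \<rho>\<^sup>2)) ^ m / ((1 + of_real \<gamma>) ^ Suc m * of_real (\<rho> ^ (2 * Suc m))))"
proof -
  have w: "w \<noteq> 0" using assms by auto
  have cw: "cnj w = of_real (\<rho>\<^sup>2) / w"
    using complex_norm_square[of w] assms w by (simp add: field_simps)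
  have sum: "of_real (\<rho>\<^sup>2) / w + of_real (\<gamma> * \<rho>\<^sup>2) = of_real (\<rho>\<^sup>2) * ((1 + of_real \<gamma> * w) / w)"
    using w by (simp add: field_simps)
  have pow: "(of_real (\<rho> ^ (2 * Suc m)) :: complex) = of_real (\<rho>\<^sup>2) * of_real (\<rho>\<^sup>2) ^ m"
    by (simp only: power_mult power_Suc of_real_mult of_real_power)
  have "cnj (w * (w + of_real (\<gamma> * \<rho>\<^sup>2)) ^ m / ((1 + of_real \<gamma>) ^ Suc m * of_real (\<rho> ^ (2 * Suc m))))
      = of_real (\<rho>\<^sup>2) / w * (of_real (\<rho>\<^sup>2) ^ m * ((1 + of_real \<gamma> * w) ^ m / w ^ m))
        / ((1 + of_real \<gamma>) ^ Suc m * (of_real (\<rho>\<^sup>2) * of_real (\<rho>\<^sup>2) ^ m))"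
  proof -
    have "cnj (w * (w + of_real (\<gamma> * \<rho>\<^sup>2)) ^ m / ((1 + of_real \<gamma>) ^ Suc m * of_real (\<rho> ^ (2 * Suc m))))
        = cnj w * (cnj w + of_real (\<gamma> * \<rho>\<^sup>2)) ^ m / ((1 + of_real \<gamma>) ^ Suc m * of_real (\<rho> ^ (2 * Suc m)))"
      by simp
    thus ?thesis unfolding cw sum pow by (simp add: power_mult_distrib power_divide)
  qed
  also have "\<dots> = coeff_kernel \<gamma> m w"
  proof -
    have "X / w * (X ^ m * (A / w ^ m)) / (B * (X * X ^ m)) = A / (B * w ^ Suc m)"
      if "X \<noteq> 0" for X A B :: complex
      using that w by (simp add: field_simps)
    thus ?thesis unfolding coeff_kernel_def using assms by simp
  qed
  finally show ?thesis by simp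
qed

lemma norm_coeff_kernel_le:
  fixes w :: complex
  assumes "0 \<le> \<gamma>" "0 < \<rho>" "\<rho> \<le> 1" "norm w = \<rho>"
  shows "norm (coeff_kernel \<gamma> m w) \<le> 1 / ((1 + \<gamma>) * \<rho> ^ Suc m)"
proof -
  have "norm (1 + of_real \<gamma> * w) \<le> 1 + \<gamma> * \<rho>"
    using norm_triangle_ineq[of 1 "of_real \<gamma> * w"] assms by (simp add: norm_mult)
  also have "\<dots> \<le> 1 + \<gamma>" using assms by (simp add: mult_left_le)
  finally have pm: "norm (1 + of_real \<gamma> * w) ^ m \<le> (1 + \<gamma>) ^ m" by (rule power_mono) simp
  moreover have "norm (1 + complex_of_real \<gamma>) = 1 + \<gamma>"
    using assms(1) by (metis abs_of_nonneg add_nonneg_nonneg norm_of_real of_real_1 of_real_add zero_le_one)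
  ultimately have "norm (coeff_kernel \<gamma> m w)
      = norm (1 + of_real \<gamma> * w) ^ m / ((1 + \<gamma>) ^ Suc m * \<rho> ^ Suc m)"
    unfolding coeff_kernel_def norm_divide norm_mult norm_power using assms by simp
  also have "\<dots> \<le> (1 + \<gamma>) ^ m / ((1 + \<gamma>) ^ Suc m * \<rho> ^ Suc m)"
    by (rule divide_right_mono[OF pm]) (use assms in simp)
  also have "\<dots> = 1 / ((1 + \<gamma>) * \<rho> ^ Suc m)"
    using assms by (simp add: divide_simps)
  finally show ?thesis .
qed

text \<open>Caratheodory's trick: if \<open>K(0) = 0\<close>, the means of \<open>cnj K\<close> and \<open>cnj (G K)\<close> over the
  circle vanish, so only \<open>-G / 2\<close> survives from \<open>1 - Re G = 1 - (G + cnj G) / 2\<close>.\<close>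

lemma integral_circlepath_one_minus_Re:
  fixes G K :: "complex \<Rightarrow> complex"
  assumes "0 < \<rho>" "G holomorphic_on cball 0 \<rho>" "K holomorphic_on cball 0 \<rho>" "K 0 = 0"
  shows "integral {0..1} (\<lambda>t. of_real (1 - Re (G (circlepath 0 \<rho> t))) * cnj (K (circlepath 0 \<rho> t)))
       = - integral {0..1} (\<lambda>t. G (circlepath 0 \<rho> t) * cnj (K (circlepath 0 \<rho> t))) / 2"
proof -
  let ?e = "circlepath 0 \<rho>"
  have cG: "continuous_on (sphere 0 \<rho>) G" and cK: "continuous_on (sphere 0 \<rho>) K"
    using assms continuous_on_subset[OF holomorphic_on_imp_continuous_on sphere_cball] by blast+
  have iK: "(\<lambda>t. cnj (K (?e t))) integrable_on {0..1}"
    and iGK: "(\<lambda>t. G (?e t) * cnj (K (?e t))) integrable_on {0..1}"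
    and iGK': "(\<lambda>t. cnj (G (?e t) * K (?e t))) integrable_on {0..1}"
    using assms(1) by (intro integrable_circlepath continuous_intros cG cK; simp)+
  have mean_K: "integral {0..1} (\<lambda>t. cnj (K (?e t))) = 0"
    using integral_cnj[of "{0..1}" "\<lambda>t. K (?e t)"] integral_circlepath_holomorphic[OF assms(1,3)] assms(4)
    by simp
  have mean_GK: "integral {0..1} (\<lambda>t. cnj (G (?e t) * K (?e t))) = 0"
    using integral_cnj[of "{0..1}" "\<lambda>t. G (?e t) * K (?e t)"] assms(4)
      integral_circlepath_holomorphic[OF assms(1) holomorphic_on_mult[OF assms(2,3)]]
    by simp
  have "of_real (1 - Re z) * cnj k = cnj k - z * cnj k / 2 - cnj (z * k) / 2" for z k :: complex
  proof -
    have re: "(of_real (Re z) :: complex) = (z + cnj z) / 2" using complex_add_cnj[of z] by simp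
    show ?thesis by (simp add: re field_simps)
  qed
  hence "integral {0..1} (\<lambda>t. of_real (1 - Re (G (?e t))) * cnj (K (?e t)))
      = integral {0..1} (\<lambda>t. cnj (K (?e t)) - G (?e t) * cnj (K (?e t)) / 2 - cnj (G (?e t) * K (?e t)) / 2)"
    by presburger
  also have "\<dots> = integral {0..1} (\<lambda>t. cnj (K (?e t))) - integral {0..1} (\<lambda>t. G (?e t) * cnj (K (?e t))) / 2
        - integral {0..1} (\<lambda>t. cnj (G (?e t) * K (?e t))) / 2"
    using iK iGK iGK' by (simp add: integral_diff integrable_diff integrable_on_divide)
  finally show ?thesis unfolding mean_K mean_GK by simp
qed

lemma norm_integral_circlepath_one_minus_Re_le:
  fixes G \<phi> :: "complex \<Rightarrow> complex"
  assumes "0 < \<rho>" "G holomorphic_on cball 0 \<rho>" "\<And>w. w \<in> sphere 0 \<rho> \<Longrightarrow> Re (G w) \<le> 1"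
    and "continuous_on (sphere 0 \<rho>) \<phi>" "\<And>w. w \<in> sphere 0 \<rho> \<Longrightarrow> norm (\<phi> w) \<le> M"
  shows "norm (integral {0..1} (\<lambda>t. of_real (1 - Re (G (circlepath 0 \<rho> t))) * \<phi> (circlepath 0 \<rho> t)))
       \<le> (1 - Re (G 0)) * M"
proof -
  let ?e = "circlepath 0 \<rho>"
  have cG: "continuous_on (sphere 0 \<rho>) G"
    using assms continuous_on_subset[OF holomorphic_on_imp_continuous_on sphere_cball] by blast
  have "((\<lambda>t. G (?e t)) has_integral G 0) {0..1}"
    using integrable_circlepath[OF cG] integral_circlepath_holomorphic[OF assms(1,2)] assms(1)
    by (simp add: has_integral_integrable_integral)
  hence "((\<lambda>t. 1 - Re (G (?e t))) has_integral (1 - Re (G 0))) {0..1}"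
    using has_integral_diff[OF has_integral_const_real[of 1 0 1] has_integral_Re] by simp
  hence hM: "((\<lambda>t. (1 - Re (G (?e t))) * M) has_integral ((1 - Re (G 0)) * M)) {0..1}"
    by (rule has_integral_mult_left)
  have "norm (integral {0..1} (\<lambda>t. of_real (1 - Re (G (?e t))) * \<phi> (?e t)))
      \<le> integral {0..1} (\<lambda>t. (1 - Re (G (?e t))) * M)"
  proof (rule integral_norm_bound_integral)
    show "(\<lambda>t. of_real (1 - Re (G (?e t))) * \<phi> (?e t)) integrable_on {0..1}"
      using assms(1) by (intro integrable_circlepath continuous_intros cG assms(4)) simp
    show "(\<lambda>t. (1 - Re (G (?e t))) * M) integrable_on {0..1}" using hM by blast
    fix t :: real
    have et: "?e t \<in> sphere 0 \<rho>" using circlepath_in_sphere[of \<rho> t] assms(1) by simp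
    hence nn: "0 \<le> 1 - Re (G (?e t))" using assms(3) by simp
    hence "norm (of_real (1 - Re (G (?e t))) * \<phi> (?e t)) = (1 - Re (G (?e t))) * norm (\<phi> (?e t))"
      by (simp only: norm_mult norm_of_real abs_of_nonneg)
    also have "\<dots> \<le> (1 - Re (G (?e t))) * M" using assms(5)[OF et] nn by (rule mult_left_mono)
    finally show "norm (of_real (1 - Re (G (?e t))) * \<phi> (?e t)) \<le> (1 - Re (G (?e t))) * M" .
  qed
  also have "\<dots> = (1 - Re (G 0)) * M" using hM by (rule integral_unique)
  finally show ?thesis .
qed

lemma norm_taylor_coeff_Omega_le_radius:
  assumes "0 \<le> \<gamma>" "\<gamma> < 1" "F holomorphic_on Omega \<gamma>" "\<And>z. z \<in> Omega \<gamma> \<Longrightarrow> norm (F z) \<le> 1"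
    and "0 < \<rho>" "\<rho> < 1"
  shows "norm ((deriv ^^ Suc m) F 0 / fact (Suc m)) * \<rho> ^ Suc m \<le> 2 * (1 - Re (F 0)) / (1 + \<gamma>)"
proof -
  let ?e = "circlepath 0 \<rho>" and ?c = "(deriv ^^ Suc m) F 0 / fact (Suc m)"
  define G where "G = F \<circ> omega_map \<gamma>"
  define K where "K w = w * (w + of_real (\<gamma> * \<rho>\<^sup>2)) ^ m
                          / ((1 + of_real \<gamma>) ^ Suc m * of_real (\<rho> ^ (2 * Suc m)))" for w :: complex
  have disk: "cball 0 \<rho> \<subseteq> ball (0::complex) 1" using assms by auto
  have "G holomorphic_on ball 0 1" unfolding G_def using assms omega_map_in_Omega
    by (intro holomorphic_on_compose_gen[OF holomorphic_omega_map assms(3)]) auto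
  hence holG: "G holomorphic_on cball 0 \<rho>" using disk by (rule holomorphic_on_subset)
  have holK: "K holomorphic_on cball 0 \<rho>"
    unfolding K_def[abs_def] using one_plus_of_real_nonzero[OF assms(1)] assms(5)
    by (intro holomorphic_intros) auto
  have G_le: "norm (G w) \<le> 1" if "w \<in> sphere 0 \<rho>" for w
    using that disk assms omega_map_in_Omega unfolding G_def by auto
  have "?c = integral {0..1} (\<lambda>t. G (?e t) * coeff_kernel \<gamma> m (?e t))"
    unfolding G_def using taylor_coeff_omega_pullback[OF assms(1-3,5,6)] by simp
  also have "\<dots> = integral {0..1} (\<lambda>t. G (?e t) * cnj (K (?e t)))"
    using coeff_kernel_eq_cnj_on_circle[OF assms(5)] circlepath_in_sphere assms(5)
    unfolding K_def by (intro integral_cong) simp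
  finally have "integral {0..1} (\<lambda>t. of_real (1 - Re (G (?e t))) * cnj (K (?e t))) = - ?c / 2"
    using integral_circlepath_one_minus_Re[OF assms(5) holG holK] by (simp add: K_def)
  moreover have bound: "norm (integral {0..1} (\<lambda>t. of_real (1 - Re (G (?e t))) * cnj (K (?e t))))
      \<le> (1 - Re (G 0)) * (1 / ((1 + \<gamma>) * \<rho> ^ Suc m))"
  proof (rule norm_integral_circlepath_one_minus_Re_le[OF assms(5) holG])
    show "Re (G w) \<le> 1" if "w \<in> sphere 0 \<rho>" for w
      using complex_Re_le_cmod[of "G w"] G_le[OF that] by linarith
    show "continuous_on (sphere 0 \<rho>) (\<lambda>w. cnj (K w))"
      using continuous_on_subset[OF holomorphic_on_imp_continuous_on[OF holK] sphere_cball]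
      by (intro continuous_intros)
    show "norm (cnj (K w)) \<le> 1 / ((1 + \<gamma>) * \<rho> ^ Suc m)" if "w \<in> sphere 0 \<rho>" for w
      using norm_coeff_kernel_le[of \<gamma> \<rho> w m] coeff_kernel_eq_cnj_on_circle[of \<rho> w \<gamma> m] that assms
      unfolding K_def by simp
  qed
  moreover have "G 0 = F 0" by (simp add: G_def omega_map_def)
  ultimately have "norm ?c * \<rho> ^ Suc m
      = 2 * norm (integral {0..1} (\<lambda>t. of_real (1 - Re (G (?e t))) * cnj (K (?e t)))) * \<rho> ^ Suc m"
    by (simp add: norm_divide)
  also have "\<dots> \<le> 2 * ((1 - Re (F 0)) * (1 / ((1 + \<gamma>) * \<rho> ^ Suc m))) * \<rho> ^ Suc m"
    using bound \<open>G 0 = F 0\<close> assms(5) by (intro mult_right_mono mult_left_mono) auto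
  also have "\<dots> = 2 * (1 - Re (F 0)) / (1 + \<gamma>)"
    using assms(5) by simp
  finally show ?thesis .
qed

lemma norm_taylor_coeff_Omega_le:
  assumes "0 \<le> \<gamma>" "\<gamma> < 1" "F holomorphic_on Omega \<gamma>" "\<And>z. z \<in> Omega \<gamma> \<Longrightarrow> norm (F z) \<le> 1"
  shows "norm ((deriv ^^ Suc m) F 0 / fact (Suc m)) \<le> 2 * (1 - Re (F 0)) / (1 + \<gamma>)"
proof (rule field_le_mult_one_interval)
  fix z :: real assume z: "0 < z" "z < 1"
  hence r: "0 < root (Suc m) z" "root (Suc m) z < 1" by simp_all
  have root: "root (Suc m) z ^ Suc m = z" using z by (intro real_root_pow_pos2) auto
  from norm_taylor_coeff_Omega_le_radius[OF assms r, of m, unfolded root]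
  show "z * norm ((deriv ^^ Suc m) F 0 / fact (Suc m)) \<le> 2 * (1 - Re (F 0)) / (1 + \<gamma>)"
    by (simp only: mult.commute)
qed

lemma sums_coeff_eq_taylor_coeff:
  fixes F :: "complex \<Rightarrow> complex"
  assumes "\<And>z. z \<in> ball 0 1 \<Longrightarrow> (\<lambda>n. c n * z ^ n) sums F z"
  shows "c n = (deriv ^^ n) F 0 / fact n"
proof -
  have "summable (\<lambda>n. c n * (1/2) ^ n)" using sums_summable[OF assms] by simp
  hence "ereal (1/2) \<le> conv_radius c" using conv_radius_geI[of c "1/2 :: complex"] by simp
  hence "0 < fps_conv_radius (Abs_fps c)"
    unfolding fps_conv_radius_def by (simp add: order.strict_trans2[of 0 "ereal (1/2)"])
  moreover have "\<forall>\<^sub>F z in nhds 0. eval_fps (Abs_fps c) z = F z"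
    unfolding eventually_nhds eval_fps_def
    by (intro exI[of _ "ball 0 1"]) (auto intro: sums_unique[OF assms, symmetric])
  ultimately have "F has_fps_expansion Abs_fps c"
    unfolding has_fps_expansion_def by blast
  from fps_nth_fps_expansion[OF this, of n] show ?thesis by simp
qed

lemma coeff_combination_bound:
  assumes "0 \<le> \<gamma>" "\<gamma> < 1" "h holomorphic_on Omega \<gamma>" "g holomorphic_on Omega \<gamma>"
    and "\<And>z. z \<in> ball 0 1 \<Longrightarrow> (\<lambda>n. a n * z ^ n) sums h z"
    and "\<And>z. z \<in> ball 0 1 \<Longrightarrow> (\<lambda>n. b n * z ^ n) sums g z"
    and "\<And>z. z \<in> Omega \<gamma> \<Longrightarrow> norm (h z) + norm (g z) \<le> 1"
    and "norm u = 1" "n \<ge> 1"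
  shows "norm (a n + u * b n) \<le> 2 * (1 - norm (a 0 + u * b 0)) / (1 + \<gamma>)"
proof -
  define w where "w = a 0 + u * b 0"
  define rot where "rot = (if w = 0 then 1 else cnj w / of_real (norm w))"
  have norm_rot: "norm rot = 1" unfolding rot_def by (simp add: norm_divide)
  have rot_w: "rot * w = of_real (norm w)"
    unfolding rot_def using complex_norm_square[of w] by (simp add: field_simps power2_eq_square)
  define F where "F z = rot * (h z + u * g z)" for z
  have holF: "F holomorphic_on Omega \<gamma>" unfolding F_def[abs_def] using assms(3,4)
    by (intro holomorphic_intros)
  have F_le: "norm (F z) \<le> 1" if "z \<in> Omega \<gamma>" for z
    using norm_triangle_ineq[of "h z" "u * g z"] assms(7)[OF that] assms(8)
    unfolding F_def by (simp add: norm_mult norm_rot)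
  have "(\<lambda>k. (rot * (a k + u * b k)) * z ^ k) sums F z" if "z \<in> ball 0 1" for z
  proof -
    have "(\<lambda>k. rot * (a k * z ^ k + u * (b k * z ^ k))) sums F z"
      unfolding F_def by (intro sums_mult sums_add assms(5,6) that)
    thus ?thesis by (simp add: algebra_simps)
  qed
  hence coeff: "rot * (a k + u * b k) = (deriv ^^ k) F 0 / fact k" for k
    by (rule sums_coeff_eq_taylor_coeff)
  obtain m where n: "n = Suc m" using assms(9) by (cases n) auto
  have "norm (a n + u * b n) = norm (rot * (a n + u * b n))" by (simp add: norm_mult norm_rot)
  also have "\<dots> = norm ((deriv ^^ Suc m) F 0 / fact (Suc m))" unfolding coeff n ..
  also have "\<dots> \<le> 2 * (1 - Re (F 0)) / (1 + \<gamma>)"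
    by (rule norm_taylor_coeff_Omega_le[OF assms(1,2) holF F_le])
  also have "F 0 = of_real (norm w)" using coeff[of 0] rot_w by (simp add: w_def)
  finally show ?thesis by (simp add: w_def)
qed

lemma exists_unimodular_orthogonal:
  fixes x y :: complex
  obtains \<beta> where "norm \<beta> = 1" "orthogonal x (\<beta> * y)"
proof (cases "x = 0 \<or> y = 0")
  case True
  thus ?thesis using that[of 1] by (auto simp: orthogonal_clauses)
next
  case False
  define \<beta> where "\<beta> = \<i> * x * cnj y / of_real (norm x * norm y)"
  have "x * cnj (\<beta> * y) = - \<i> * of_real ((norm x)\<^sup>2 * (norm y)\<^sup>2 / (norm x * norm y))"
    using False unfolding \<beta>_def
    by (simp add: field_simps complex_norm_square[symmetric])
  hence re0: "Re (x * cnj (\<beta> * y)) = 0" by simp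
  have ip: "inner x z = Re (x * cnj z)" for z by (simp add: inner_complex_def)
  have "orthogonal x (\<beta> * y)" unfolding orthogonal_def ip by (rule re0)
  moreover have "norm \<beta> = 1" using False unfolding \<beta>_def by (simp add: norm_mult norm_divide)
  ultimately show ?thesis using that by blast
qed

lemma norm_coeff_pair_bound:
  assumes "0 \<le> \<gamma>" "\<gamma> < 1" "h holomorphic_on Omega \<gamma>" "g holomorphic_on Omega \<gamma>"
    and "\<And>z. z \<in> ball 0 1 \<Longrightarrow> (\<lambda>n. a n * z ^ n) sums h z"
    and "\<And>z. z \<in> ball 0 1 \<Longrightarrow> (\<lambda>n. b n * z ^ n) sums g z"
    and "\<And>z. z \<in> Omega \<gamma> \<Longrightarrow> norm (h z) + norm (g z) \<le> 1"
    and "n \<ge> 1"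
  shows "sqrt ((norm (a n))\<^sup>2 + (norm (b n))\<^sup>2)
       \<le> 2 * (1 - sqrt ((norm (a 0))\<^sup>2 + (norm (b 0))\<^sup>2)) / (1 + \<gamma>)"
proof -
  define B where "B = 2 * (1 - sqrt ((norm (a 0))\<^sup>2 + (norm (b 0))\<^sup>2)) / (1 + \<gamma>)"
  obtain \<beta> where \<beta>: "norm \<beta> = 1" "orthogonal (a 0) (\<beta> * b 0)"
    using exists_unimodular_orthogonal .
  have bound: "norm (a n + u * b n) \<le> B" if "u = \<beta> \<or> u = - \<beta>" for u
  proof -
    have u: "norm u = 1" using that \<beta>(1) by auto
    have "orthogonal (a 0) (u * b 0)" using that \<beta>(2) by (auto simp: orthogonal_def)
    hence "(norm (a 0 + u * b 0))\<^sup>2 = (norm (a 0))\<^sup>2 + (norm (b 0))\<^sup>2"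
      using u by (simp add: norm_add_Pythagorean norm_mult)
    hence "norm (a 0 + u * b 0) = sqrt ((norm (a 0))\<^sup>2 + (norm (b 0))\<^sup>2)"
      by (metis norm_ge_zero real_sqrt_abs2 real_sqrt_unique)
    thus ?thesis using coeff_combination_bound[OF assms(1-7) u assms(8)] unfolding B_def by simp
  qed
  have B: "0 \<le> B" using bound[of \<beta>] norm_ge_zero order_trans by blast
  have "(norm (a n + \<beta> * b n))\<^sup>2 + (norm (a n - \<beta> * b n))\<^sup>2 = 2 * ((norm (a n))\<^sup>2 + (norm (\<beta> * b n))\<^sup>2)"
    using dot_norm[of "a n" "\<beta> * b n"] dot_norm_neg[of "a n" "\<beta> * b n"] by (simp add: field_simps)
  moreover have "(norm (a n + \<beta> * b n))\<^sup>2 \<le> B\<^sup>2" "(norm (a n - \<beta> * b n))\<^sup>2 \<le> B\<^sup>2"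
    using bound[of \<beta>] bound[of "- \<beta>"] by (auto intro: power_mono)
  ultimately have "(norm (a n))\<^sup>2 + (norm (b n))\<^sup>2 \<le> B\<^sup>2" by (simp add: norm_mult \<beta>(1))
  hence "sqrt ((norm (a n))\<^sup>2 + (norm (b n))\<^sup>2) \<le> sqrt (B\<^sup>2)" by (rule real_sqrt_le_mono)
  thus ?thesis unfolding B_def[symmetric] using B by simp
qed

lemma geometric_tail_bound:
  fixes s :: "nat \<Rightarrow> real"
  assumes "\<And>n. 0 \<le> s n" "\<And>n. n \<ge> 1 \<Longrightarrow> s n \<le> B" "0 \<le> r" "r < 1"
  shows "summable (\<lambda>n. s n * r ^ n)" "(\<Sum>n. s (Suc n) * r ^ Suc n) \<le> B * r / (1 - r)"
proof -
  have "(\<lambda>n. B * r * r ^ n) sums (B * r * (1 / (1 - r)))"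
    by (intro sums_mult geometric_sums) (use assms in simp)
  hence geo: "(\<lambda>n. B * r * r ^ n) sums (B * r / (1 - r))" by simp
  have le: "norm (s (Suc n) * r ^ Suc n) \<le> B * r * r ^ n" for n
  proof -
    have "s (Suc n) * r ^ Suc n \<le> B * r ^ Suc n" using assms by (intro mult_right_mono) auto
    thus ?thesis using assms by (simp add: mult.assoc)
  qed
  have tail: "summable (\<lambda>n. s (Suc n) * r ^ Suc n)"
    by (rule summable_comparison_test[OF _ sums_summable[OF geo]]) (use le in blast)
  thus "summable (\<lambda>n. s n * r ^ n)" by (subst summable_Suc_iff[symmetric])
  have "(\<Sum>n. s (Suc n) * r ^ Suc n) \<le> (\<Sum>n. B * r * r ^ n)"
    using le by (intro suminf_le[OF _ tail sums_summable[OF geo]]) (auto dest: abs_le_D1)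
  thus "(\<Sum>n. s (Suc n) * r ^ Suc n) \<le> B * r / (1 - r)" using sums_unique[OF geo] by simp
qed

theorem theorem2p7:
  fixes \<gamma> r :: real and h g :: "complex \<Rightarrow> complex" and a b :: "nat \<Rightarrow> complex"
  assumes "0 \<le> \<gamma>" and "\<gamma> < 1"
    and "h holomorphic_on Omega \<gamma>" and "g holomorphic_on Omega \<gamma>"
    and "\<And>z. z \<in> ball 0 1 \<Longrightarrow> (\<lambda>n. a n * z ^ n) sums h z"
    and "\<And>z. z \<in> ball 0 1 \<Longrightarrow> (\<lambda>n. b n * z ^ n) sums g z"
    and "\<And>z. z \<in> Omega \<gamma> \<Longrightarrow> norm (h z) + norm (g z) \<le> 1"
    and "0 \<le> r" and "r \<le> (1 + \<gamma>) / (3 + \<gamma>)"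
  shows "summable (\<lambda>n. sqrt ((norm (a n))\<^sup>2 + (norm (b n))\<^sup>2) * r ^ n) \<and>
         sqrt ((norm (a 0))\<^sup>2 + (norm (b 0))\<^sup>2)
           + (\<Sum>n. sqrt ((norm (a (Suc n)))\<^sup>2 + (norm (b (Suc n)))\<^sup>2) * r ^ (Suc n)) \<le> 1"
proof -
  define s where "s n = sqrt ((norm (a n))\<^sup>2 + (norm (b n))\<^sup>2)" for n
  define B where "B = 2 * (1 - s 0) / (1 + \<gamma>)"
  have "(1 + \<gamma>) / (3 + \<gamma>) < 1" using assms(1) by simp
  hence r: "r < 1" using assms(9) by linarith
  have s_le: "s n \<le> B" if "n \<ge> 1" for n
    unfolding s_def B_def by (rule norm_coeff_pair_bound[OF assms(1-7) that])
  have tail: "summable (\<lambda>n. s n * r ^ n)" "(\<Sum>n. s (Suc n) * r ^ Suc n) \<le> B * r / (1 - r)"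
    using geometric_tail_bound[OF _ s_le assms(8) r] by (auto simp: s_def)
  have "0 \<le> s 1" by (simp add: s_def)
  hence "0 \<le> B" using s_le[of 1] by linarith
  moreover have "r / (1 - r) \<le> (1 + \<gamma>) / 2"
    using assms(1,8,9) r by (simp add: field_simps)
  ultimately have "B * r / (1 - r) \<le> 1 - s 0"
    using mult_left_mono[of "r / (1 - r)" "(1 + \<gamma>) / 2" B] assms(1) by (simp add: B_def)
  with tail show ?thesis unfolding s_def by simp
qed

end
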